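(* Let $G=(V,E)$ and $G'=(V,E')$ be simple directed graphs on the same vertex set with the same underlying undirected graph, i.e. $\{\{u,v\} : (u,v)\in E\}=\{\{u,v\}:(u,v)\in E'\}$. Let $D:=(E'\setminus E)\cup(E\setminus E')$ and $N:=\mathrm{nbhd}(D)$. Then $$d\mathcal{F}l(G') = d\mathcal{F}l(G'[N]) \uplus \big(d\mathcal{F}l(G)\setminus d\mathcal{F}l(G[N])\big),$$ where $\uplus$ denotes a disjoint union.
   Context: A simple directed graph is a pair $G=(V,E)$ with $V$ finite and $E\subseteq (V\times V)\setminus\{(v,v):v\in V\}$; $(i,j)\in E$ is an edge from $i$ to $j$. For $W\subseteq V$, the induced subgraph $G[W]$ is $(W, E\cap (W\times W))$. A simplex of dimension $d$ in $G$ is a tuple $[v_0,\dots,v_d]$ of distinct vertices such that $(v_a,v_b)\in E$ for all $a<b$ (equivalently, a subgraph of a clique together with a total order on its vertices such that the chosen edges point from lower to higher vertices). The directed flag complex $d\mathcal{F}l(G)$ is the collection of all simplices of all dimensions $d\ge 0$ of $G$; a simplex of an induced subgraph $G[W]$ is regarded as a simplex of $G$. For an (ordered) pair $(i,j)$ of vertices joined by an edge in either direction, $\mathrm{nbhd}((i,j)) = \{i,j\}\cup\big((\mathrm{In}(i)\cup\mathrm{Out}(i))\cap(\mathrm{In}(j)\cup\mathrm{Out}(j))\big)$ where $\mathrm{In}(v)=\{u:(u,v)\in E\}$ and $\mathrm{Out}(v)=\{u:(v,u)\in E\}$ (this set is the same whether computed in $G$ or $G'$, since they have the same underlying undirected graph).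 For a set $D$ of such pairs, $\mathrm{nbhd}(D)=\bigcup_{e\in D}\mathrm{nbhd}(e)$. *)

theory Defs
  imports Main
begin

definition simple_digraph :: "'a set \<Rightarrow> ('a \<times> 'a) set \<Rightarrow> bool" where
  "simple_digraph V E \<longleftrightarrow> finite V \<and> E \<subseteq> (V \<times> V) - {(v, v) | v. v \<in> V}"

text \<open>Induced subgraph G[W] = (W, E \<inter> (W \<times> W)); we only record its edge set,
its vertex set being W.\<close>
definition induced_edges :: "('a \<times> 'a) set \<Rightarrow> 'a set \<Rightarrow> ('a \<times> 'a) set" where
  "induced_edges E W = E \<inter> (W \<times> W)"

text \<open>A simplex of dimension d = length - 1 \<ge> 0: a tuple of distinct vertices
with an edge from v_a to v_b whenever a < b.\<close>
definition is_simplex :: "'a set \<Rightarrow> ('a \<times> 'a) set \<Rightarrow> 'a list \<Rightarrow> bool" where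
  "is_simplex V E xs \<longleftrightarrow> xs \<noteq> [] \<and> set xs \<subseteq> V \<and> distinct xs \<and>
     (\<forall>a b. a < b \<and> b < length xs \<longrightarrow> (xs ! a, xs ! b) \<in> E)"

definition dFl :: "'a set \<Rightarrow> ('a \<times> 'a) set \<Rightarrow> 'a list set" where
  "dFl V E = {xs. is_simplex V E xs}"

definition In_nb :: "('a \<times> 'a) set \<Rightarrow> 'a \<Rightarrow> 'a set" where
  "In_nb E v = {u. (u, v) \<in> E}"

definition Out_nb :: "('a \<times> 'a) set \<Rightarrow> 'a \<Rightarrow> 'a set" where
  "Out_nb E v = {u. (v, u) \<in> E}"

definition nbhd :: "('a \<times> 'a) set \<Rightarrow> 'a \<times> 'a \<Rightarrow> 'a set" where
  "nbhd E e = (case e of (i, j) \<Rightarrow>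
     {i, j} \<union> ((In_nb E i \<union> Out_nb E i) \<inter> (In_nb E j \<union> Out_nb E j)))"

definition nbhd_set :: "('a \<times> 'a) set \<Rightarrow> ('a \<times> 'a) set \<Rightarrow> 'a set" where
  "nbhd_set E D = (\<Union>e\<in>D. nbhd E e)"

definition undirected_edges :: "('a \<times> 'a) set \<Rightarrow> 'a set set" where
  "undirected_edges E = {{u, v} | u v. (u, v) \<in> E}"

end

theory Submission
  imports Defs
begin

text \<open>Every vertex of a simplex is joined to each of its other vertices, so a simplex that uses
  an edge e lies inside nbhd(e). Hence a simplex not contained in N uses no edge of D, and on
  edges outside D the graphs G and G' agree; simplices inside N are exactly those of G[N]
  resp. G'[N].\<close>

lemma undirected_edges_eq_imp_subset:
  assumes "undirected_edges E = undirected_edges E'"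
  shows "E' \<subseteq> E \<union> E\<inverse>"
proof
  fix e assume e: "e \<in> E'"
  obtain x y where xy: "e = (x, y)" by fastforce
  have "{x, y} \<in> undirected_edges E"
    using assms e xy unfolding undirected_edges_def by blast
  then obtain u v where "{x, y} = {u, v}" "(u, v) \<in> E"
    unfolding undirected_edges_def by blast
  then show "e \<in> E \<union> E\<inverse>" using xy by (auto simp: doubleton_eq_iff)
qed

lemma mem_In_Out_nb_iff: "u \<in> In_nb E v \<union> Out_nb E v \<longleftrightarrow> (u, v) \<in> E \<union> E\<inverse>"
  unfolding In_nb_def Out_nb_def by auto

lemma simplex_vertices_adjacent:
  assumes "F \<subseteq> E \<union> E\<inverse>" and "is_simplex V F xs"
    and "c < length xs" and "a < length xs" and "c \<noteq> a"
  shows "xs ! c \<in> In_nb E (xs ! a) \<union> Out_nb E (xs ! a)"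
proof -
  have "(xs ! c, xs ! a) \<in> F \<union> F\<inverse>"
    using assms(2-5) unfolding is_simplex_def by (cases "c < a") auto
  then show ?thesis using assms(1) unfolding mem_In_Out_nb_iff by blast
qed

lemma simplex_subset_nbhd:
  assumes "F \<subseteq> E \<union> E\<inverse>" and "is_simplex V F xs" and "a < b" and "b < length xs"
  shows "set xs \<subseteq> nbhd E (xs ! a, xs ! b)"
proof
  fix z assume "z \<in> set xs"
  then obtain c where c: "c < length xs" "z = xs ! c" by (metis in_set_conv_nth)
  show "z \<in> nbhd E (xs ! a, xs ! b)"
  proof (cases "c = a \<or> c = b")
    case True
    then show ?thesis using c unfolding nbhd_def by auto
  next
    case False
    then show ?thesis
      using simplex_vertices_adjacent[OF assms(1,2) c(1)] assms(3,4) c(2)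
      unfolding nbhd_def by auto
  qed
qed

lemma simplex_subset_nbhd_set:
  assumes "F \<subseteq> E \<union> E\<inverse>" and "is_simplex V F xs" and "a < b" and "b < length xs"
    and "(xs ! a, xs ! b) \<in> D"
  shows "set xs \<subseteq> nbhd_set E D"
  using simplex_subset_nbhd[OF assms(1-4)] assms(5) unfolding nbhd_set_def by blast

lemma is_simplex_iff_outside_nbhd_set:
  assumes "E' \<subseteq> E \<union> E\<inverse>" and "\<not> set xs \<subseteq> nbhd_set E ((E' - E) \<union> (E - E'))"
  shows "is_simplex V E' xs \<longleftrightarrow> is_simplex V E xs"
proof -
  have no_diff_edge: "(xs ! a, xs ! b) \<notin> (E' - E) \<union> (E - E')"
    if "F \<subseteq> E \<union> E\<inverse>" "is_simplex V F xs" "a < b" "b < length xs" for F a b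
    using simplex_subset_nbhd_set[OF that] assms(2) by meson
  show ?thesis
  proof
    assume s: "is_simplex V E' xs"
    show "is_simplex V E xs"
      using s no_diff_edge[OF assms(1) s] unfolding is_simplex_def by blast
  next
    assume s: "is_simplex V E xs"
    show "is_simplex V E' xs"
      using s no_diff_edge[OF Un_upper1 s] unfolding is_simplex_def by blast
  qed
qed

lemma is_simplex_induced_edges_iff:
  assumes "W \<subseteq> V"
  shows "is_simplex W (induced_edges F W) xs \<longleftrightarrow> is_simplex V F xs \<and> set xs \<subseteq> W"
  using assms unfolding is_simplex_def induced_edges_def by (auto; meson less_trans nth_mem subsetD)

lemma nbhd_set_subset:
  assumes "E \<subseteq> V \<times> V" and "D \<subseteq> V \<times> V"
  shows "nbhd_set E D \<subseteq> V"
  using assms unfolding nbhd_set_def nbhd_def In_nb_def Out_nb_def by fastforce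

theorem lemma2p9:
  fixes V :: "'a set" and E E' :: "('a \<times> 'a) set"
  assumes "simple_digraph V E" and "simple_digraph V E'"
    and "undirected_edges E = undirected_edges E'"
  defines "D \<equiv> (E' - E) \<union> (E - E')"
  defines "N \<equiv> nbhd_set E D"
  shows "dFl V E' = dFl N (induced_edges E' N) \<union> (dFl V E - dFl N (induced_edges E N))
     \<and> dFl N (induced_edges E' N) \<inter> (dFl V E - dFl N (induced_edges E N)) = {}"
proof -
  have "E \<subseteq> V \<times> V" "E' \<subseteq> V \<times> V"
    using assms(1,2) unfolding simple_digraph_def by auto
  then have "N \<subseteq> V"
    unfolding N_def D_def by (intro nbhd_set_subset) auto
  then have inside: "is_simplex N (induced_edges F N) xs \<longleftrightarrow> is_simplex V F xs \<and> set xs \<subseteq> N"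
    for F xs by (rule is_simplex_induced_edges_iff)
  have outside: "is_simplex V E' xs \<longleftrightarrow> is_simplex V E xs" if "\<not> set xs \<subseteq> N" for xs
    using is_simplex_iff_outside_nbhd_set[OF undirected_edges_eq_imp_subset[OF assms(3)]] that
    unfolding N_def D_def .
  show ?thesis
    unfolding dFl_def using inside outside by auto
qed

end
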